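(* Consider the deterministic crowd-learning system described in the context, with $N\ge 2$ PoIs and reward rate $\beta>0$. Let $\overline{\Delta}_{\max}^{(\beta)}$ be the average maximum age when every user acts selfishly, and $\overline{\Delta}_{\max}^{(\mathrm{OPT})}$ the minimum average maximum age over all admissible assignment policies. Then the price of anarchy $$\rho(\beta)\triangleq 1-\frac{\overline{\Delta}_{\max}^{(\mathrm{OPT})}}{\overline{\Delta}_{\max}^{(\beta)}}$$ satisfies $$\rho(\beta)\le \frac{p_{\max}}{(N-1)\beta+p_{\max}}=O(1/\beta).$$
   Context: Deterministic crowd-learning model. There are $N\ge 2$ points of interest (PoIs), indexed $n=1,\dots,N$, and time is slotted, $t=0,1,2,\dots$. Each PoI $n$ has a price $p_n[t]\in[p_{\min},p_{\max}]$, where $0<p_{\min}\le p_{\max}$; the price sequence may be arbitrary. The service provider keeps a recorded price $r_n[t]$ for each PoI, with $r_n[0]\in[p_{\min},p_{\max}]$. Each PoI also has an age $\Delta_n[t]\in\{0,1,2,\dots\}$, with finite initial values $\Delta_n[0]$. In every slot exactly one user arrives. That user selects a single PoI, and we write $S_n[t]=1$ if PoI $n$ is selected in slot $t$ and $S_n[t]=0$ otherwise, so that $\sum_n S_n[t]=1$. The selected PoI's record is refreshed: $r_n[t+1]=p_n[t]$ if $S_n[t]=1$, and $r_n[t+1]=r_n[t]$ otherwise. Ages evolve as $$\Delta_n[t+1]=(\Delta_n[t]+1)(1-S_n[t]).$$ Selfish behavior with reward rate $\beta>0$: the user in slot $t$ selects $$n^*[t]\in\arg\max_{n}\big(\beta\Delta_n[t]-r_n[t]\big),$$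 with ties broken arbitrarily. An admissible policy is any rule that, in each slot, chooses the single PoI for that slot's user based on the past history. The average maximum age of a policy is $$\overline{\Delta}_{\max}=\limsup_{T\to\infty}\frac1T\sum_{t=0}^{T-1}\mathbb{E}\Big[\max_n\Delta_n[t]\Big].$$ $\overline{\Delta}_{\max}^{(\beta)}$ denotes this quantity under selfish behavior, and $\overline{\Delta}_{\max}^{(\mathrm{OPT})}$ its infimum over admissible policies. *)

theory Defs
  imports "HOL-Analysis.Analysis" "HOL-Library.Extended_Real"
begin

text \<open>PoIs are indexed by 0..<N. A selection sequence sel maps slot t to the PoI
  chosen by that slot's user (so S_n[t] = 1 iff sel t = n).
  Prices are p n t, initial records r0 n, initial ages D0 n.\<close>

primrec age :: "(nat \<Rightarrow> nat) \<Rightarrow> (nat \<Rightarrow> nat) \<Rightarrow> nat \<Rightarrow> nat \<Rightarrow> nat" where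
  "age D0 sel n 0 = D0 n"
| "age D0 sel n (Suc t) = (if sel t = n then 0 else age D0 sel n t + 1)"

primrec recorded :: "(nat \<Rightarrow> real) \<Rightarrow> (nat \<Rightarrow> nat \<Rightarrow> real) \<Rightarrow> (nat \<Rightarrow> nat) \<Rightarrow> nat \<Rightarrow> nat \<Rightarrow> real" where
  "recorded r0 p sel n 0 = r0 n"
| "recorded r0 p sel n (Suc t) = (if sel t = n then p n t else recorded r0 p sel n t)"

definition admissible :: "nat \<Rightarrow> (nat \<Rightarrow> nat) \<Rightarrow> bool" where
  "admissible N sel \<longleftrightarrow> (\<forall>t. sel t < N)"

definition selfish ::
  "nat \<Rightarrow> real \<Rightarrow> (nat \<Rightarrow> nat) \<Rightarrow> (nat \<Rightarrow> real) \<Rightarrow> (nat \<Rightarrow> nat \<Rightarrow> real) \<Rightarrow> (nat \<Rightarrow> nat) \<Rightarrow> bool" where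
  "selfish N \<beta> D0 r0 p sel \<longleftrightarrow> admissible N sel \<and>
     (\<forall>t. \<forall>m<N. \<beta> * real (age D0 sel m t) - recorded r0 p sel m t
                \<le> \<beta> * real (age D0 sel (sel t) t) - recorded r0 p sel (sel t) t)"

text \<open>Average maximum age (deterministic system, so the expectation is the value itself).\<close>
definition avg_max_age :: "nat \<Rightarrow> (nat \<Rightarrow> nat) \<Rightarrow> (nat \<Rightarrow> nat) \<Rightarrow> ereal" where
  "avg_max_age N D0 sel =
     limsup (\<lambda>T. ereal ((\<Sum>t<T. real (Max ((\<lambda>n. age D0 sel n t) ` {..<N}))) / real T))"

definition opt_avg_max_age :: "nat \<Rightarrow> (nat \<Rightarrow> nat) \<Rightarrow> ereal" where
  "opt_avg_max_age N D0 = (INF sel \<in> {sel. admissible N sel}. avg_max_age N D0 sel)"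

end

theory Submission
  imports Defs
begin

text \<open>Any admissible policy leaves some PoI at age at least N - 1 once N - 1 slots have
  passed: ages below N - 1 for all N PoIs would require N distinct refreshes within the last
  N - 1 slots. Under selfish behaviour, a PoI that has not been refreshed for N slots
  witnesses, by pigeonhole, a PoI m refreshed twice in that window; the user who refreshed m
  the second time preferred m, so beta times the age gap is at most pmax - pmin. Hence after slot N all
  ages are at most N - 1 + (pmax - pmin) / beta, and the same bounds hold for the long-run
  average of the maximum age, both for the optimum and for the selfish system.\<close>

lemma sum_le_eventual_bound:
  fixes f :: "nat \<Rightarrow> real"
  assumes "\<And>t. t \<ge> K \<Longrightarrow> f t \<le> B"
  obtains C where "\<And>T. T \<ge> K \<Longrightarrow> (\<Sum>t<T. f t) \<le> real T * B + C"
proof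
  fix T assume T: "T \<ge> K"
  have "(\<Sum>t<T. f t) \<le> (\<Sum>t<T. max (f t) B)" by (intro sum_mono) simp
  also have "\<dots> = real T * B + (\<Sum>t<T. max (f t) B - B)" by (simp add: sum_subtractf)
  also have "(\<Sum>t<T. max (f t) B - B) = (\<Sum>t<K. max (f t) B - B)"
    by (rule sum.mono_neutral_right) (use T assms in \<open>auto simp: max_def\<close>)
  finally show "(\<Sum>t<T. f t) \<le> real T * B + (\<Sum>t<K. max (f t) B - B)" .
qed

lemma ereal_plus_const_over_nat_tendsto:
  "((\<lambda>T. ereal (B + C / real T)) \<longlongrightarrow> ereal B) sequentially"
proof -
  have "(\<lambda>T. B + C / real T) \<longlonglongrightarrow> B + 0"
    by (intro tendsto_intros)
  then show ?thesis by (intro tendsto_intros) simp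
qed

lemma limsup_average_le:
  fixes f :: "nat \<Rightarrow> real"
  assumes "\<And>t. t \<ge> K \<Longrightarrow> f t \<le> B"
  shows "limsup (\<lambda>T. ereal ((\<Sum>t<T. f t) / real T)) \<le> ereal B"
proof -
  obtain C where C: "\<And>T. T \<ge> K \<Longrightarrow> (\<Sum>t<T. f t) \<le> real T * B + C"
    using sum_le_eventual_bound assms by blast
  have "eventually (\<lambda>T. ereal ((\<Sum>t<T. f t) / real T) \<le> ereal (B + C / real T)) sequentially"
    using eventually_ge_at_top[of "Suc K"]
    by eventually_elim (use C in \<open>simp add: pos_divide_le_eq field_simps\<close>)
  then have "limsup (\<lambda>T. ereal ((\<Sum>t<T. f t) / real T)) \<le> limsup (\<lambda>T. ereal (B + C / real T))"
    by (rule Limsup_mono)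
  also have "\<dots> = ereal B"
    by (rule lim_imp_Limsup[OF _ ereal_plus_const_over_nat_tendsto]) simp
  finally show ?thesis .
qed

lemma limsup_average_ge:
  fixes f :: "nat \<Rightarrow> real"
  assumes "\<And>t. t \<ge> K \<Longrightarrow> f t \<ge> B"
  shows "limsup (\<lambda>T. ereal ((\<Sum>t<T. f t) / real T)) \<ge> ereal B"
proof -
  obtain C where C: "\<And>T. T \<ge> K \<Longrightarrow> (\<Sum>t<T. - f t) \<le> real T * - B + C"
    using sum_le_eventual_bound[of K "\<lambda>t. - f t" "- B"] assms by force
  have "eventually (\<lambda>T. ereal (B + - C / real T) \<le> ereal ((\<Sum>t<T. f t) / real T)) sequentially"
    using eventually_ge_at_top[of "Suc K"]
  proof eventually_elim
    case (elim T)
    then have "real T * B - C \<le> (\<Sum>t<T. f t)" using C[of T] by (simp add: sum_negf)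
    then have "(real T * B - C) / real T \<le> (\<Sum>t<T. f t) / real T" by (simp add: divide_right_mono)
    moreover have "(real T * B - C) / real T = B + - C / real T" using elim by (simp add: field_simps)
    ultimately show ?case by simp
  qed
  then have "limsup (\<lambda>T. ereal (B + - C / real T)) \<le> limsup (\<lambda>T. ereal ((\<Sum>t<T. f t) / real T))"
    by (rule Limsup_mono)
  moreover have "limsup (\<lambda>T. ereal (B + - C / real T)) = ereal B"
    by (rule lim_imp_Limsup[OF _ ereal_plus_const_over_nat_tendsto]) simp
  ultimately show ?thesis by simp
qed

lemma sel_at_last_refresh:
  "age D0 sel n t < t \<Longrightarrow> sel (t - 1 - age D0 sel n t) = n"
  by (induction t) (auto split: if_splits)

lemma age_le_since_selection:
  "sel s = n \<Longrightarrow> s < t \<Longrightarrow> age D0 sel n t \<le> t - s - 1"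
  by (induction t) (auto simp: less_Suc_eq)

lemma age_add_if_unselected:
  "(\<And>u. u < j \<Longrightarrow> sel (t + u) \<noteq> n) \<Longrightarrow> age D0 sel n (t + j) = age D0 sel n t + j"
  by (induction j) auto

lemma recorded_bounds:
  assumes "\<And>t. pmin \<le> p n t \<and> p n t \<le> pmax" and "pmin \<le> r0 n \<and> r0 n \<le> pmax"
  shows "pmin \<le> recorded r0 p sel n t \<and> recorded r0 p sel n t \<le> pmax"
  using assms by (induction t) auto

lemma admissible_ex_age_ge:
  assumes "admissible N sel" and "N > 0" and "t \<ge> N - 1"
  shows "\<exists>n<N. age D0 sel n t \<ge> N - 1"
proof (rule ccontr)
  assume "\<not> ?thesis"
  then have young: "\<And>n. n < N \<Longrightarrow> age D0 sel n t < N - 1" by force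
  define last_refresh where "last_refresh n = t - 1 - age D0 sel n t" for n
  have "sel (last_refresh n) = n" if "n < N" for n
    unfolding last_refresh_def using young[OF that] assms(3) by (intro sel_at_last_refresh) linarith
  then have "inj_on last_refresh {..<N}" by (metis inj_on_inverseI lessThan_iff)
  moreover have "last_refresh ` {..<N} \<subseteq> {t + 1 - N..<t}"
    using young assms(3) by (force simp: last_refresh_def)
  ultimately have "card {..<N} \<le> card {t + 1 - N..<t}" by (intro card_inj_on_le) auto
  with assms(2,3) show False by simp
qed

lemma admissible_window_repeats:
  assumes "admissible N sel" and "n < N" and "\<And>s. a \<le> s \<Longrightarrow> s < a + N \<Longrightarrow> sel s \<noteq> n"
  obtains s1 s2 where "a \<le> s1" "s1 < s2" "s2 < a + N" "sel s1 = sel s2"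
proof -
  have "sel ` {a..<a + N} \<subseteq> {..<N} - {n}"
    using assms by (fastforce simp: admissible_def)
  moreover have "card ({..<N} - {n}) < card {a..<a + N}" using assms(2) by simp
  ultimately have "\<not> inj_on sel {a..<a + N}"
    using card_inj_on_le[of sel "{a..<a + N}" "{..<N} - {n}"] by fastforce
  then obtain s1 s2 where "s1 \<in> {a..<a + N}" "s2 \<in> {a..<a + N}" "s1 < s2" "sel s1 = sel s2"
    unfolding inj_on_def by (metis linorder_neqE_nat)
  then show thesis using that by auto
qed

lemma selfish_age_le_chosen:
  assumes "selfish N \<beta> D0 r0 p sel" and "\<beta> > 0" and "n < N"
    and "\<And>n t. n < N \<Longrightarrow> pmin \<le> p n t \<and> p n t \<le> pmax"
    and "\<And>n. n < N \<Longrightarrow> pmin \<le> r0 n \<and> r0 n \<le> pmax"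
  shows "real (age D0 sel n t) \<le> real (age D0 sel (sel t) t) + (pmax - pmin) / \<beta>"
proof -
  have "sel t < N" using assms(1) by (simp add: selfish_def admissible_def)
  then have "recorded r0 p sel n t \<le> pmax" "pmin \<le> recorded r0 p sel (sel t) t"
    using recorded_bounds assms(3-5) by blast+
  moreover have "\<beta> * real (age D0 sel n t) - recorded r0 p sel n t
      \<le> \<beta> * real (age D0 sel (sel t) t) - recorded r0 p sel (sel t) t"
    using assms(1,3) by (simp add: selfish_def)
  ultimately have "\<beta> * real (age D0 sel n t) \<le> \<beta> * (real (age D0 sel (sel t) t) + (pmax - pmin) / \<beta>)"
    using assms(2) by (simp add: distrib_left)
  then show ?thesis using assms(2) by simp
qed

lemma selfish_age_le:
  assumes sf: "selfish N \<beta> D0 r0 p sel" and "\<beta> > 0" and "pmin \<le> pmax"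
    and "\<And>n t. n < N \<Longrightarrow> pmin \<le> p n t \<and> p n t \<le> pmax"
    and "\<And>n. n < N \<Longrightarrow> pmin \<le> r0 n \<and> r0 n \<le> pmax"
    and t: "t \<ge> N" and n: "n < N"
  shows "real (age D0 sel n t) \<le> real N - 1 + (pmax - pmin) / \<beta>"
proof (cases "age D0 sel n t < N")
  case True
  have "0 \<le> (pmax - pmin) / \<beta>" using assms(2,3) by simp
  with True show ?thesis by linarith
next
  case False
  have unselected: "sel s \<noteq> n" if "t - N \<le> s" "s < t" for s
    using age_le_since_selection[of sel s n t D0] that False by linarith
  obtain s1 s2 where s12: "t - N \<le> s1" "s1 < s2" "s2 < t" "sel s1 = sel s2"
    using admissible_window_repeats[of N sel n "t - N"] sf n t unselected
    by (auto simp: selfish_def)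
  have "age D0 sel n (s2 + (t - s2)) = age D0 sel n s2 + (t - s2)"
    by (rule age_add_if_unselected) (use s12 unselected in auto)
  then have "real (age D0 sel n t) = real (age D0 sel n s2) + real t - real s2"
    using s12 by simp
  moreover have "real (age D0 sel n s2) \<le> real (age D0 sel (sel s2) s2) + (pmax - pmin) / \<beta>"
    using selfish_age_le_chosen assms(1,2,4,5) n by blast
  moreover have "age D0 sel (sel s2) s2 \<le> s2 - s1 - 1"
    using age_le_since_selection s12 by metis
  ultimately show ?thesis using s12 t by linarith
qed

lemma admissible_avg_max_age_ge:
  assumes "admissible N sel" and "N \<ge> 1"
  shows "ereal (real N - 1) \<le> avg_max_age N D0 sel"
  unfolding avg_max_age_def
proof (rule limsup_average_ge[where K = "N - 1"])
  fix t assume "N - 1 \<le> t"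
  then obtain n where "n < N" "age D0 sel n t \<ge> N - 1"
    using admissible_ex_age_ge[of N sel t D0] assms by auto
  then have "N - 1 \<le> Max ((\<lambda>n. age D0 sel n t) ` {..<N})"
    by (subst Max_ge_iff) auto
  then show "real N - 1 \<le> real (Max ((\<lambda>n. age D0 sel n t) ` {..<N}))"
    using assms(2) by linarith
qed

lemma selfish_avg_max_age_le:
  assumes "selfish N \<beta> D0 r0 p sel" and "\<beta> > 0" and "pmin \<le> pmax" and "N \<ge> 1"
    and "\<And>n t. n < N \<Longrightarrow> pmin \<le> p n t \<and> p n t \<le> pmax"
    and "\<And>n. n < N \<Longrightarrow> pmin \<le> r0 n \<and> r0 n \<le> pmax"
  shows "avg_max_age N D0 sel \<le> ereal (real N - 1 + (pmax - pmin) / \<beta>)"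
  unfolding avg_max_age_def
proof (rule limsup_average_le[where K = N])
  fix t assume "N \<le> t"
  then have "\<forall>n<N. real (age D0 sel n t) \<le> real N - 1 + (pmax - pmin) / \<beta>"
    using selfish_age_le assms by blast
  moreover have "Max ((\<lambda>n. age D0 sel n t) ` {..<N}) \<in> (\<lambda>n. age D0 sel n t) ` {..<N}"
    by (rule Max_in) (use assms(4) in \<open>auto simp: lessThan_empty_iff\<close>)
  ultimately show "real (Max ((\<lambda>n. age D0 sel n t) ` {..<N})) \<le> real N - 1 + (pmax - pmin) / \<beta>"
    by auto
qed

lemma one_minus_ratio_le:
  fixes L s opt \<beta> P :: real
  assumes "0 < L" "L \<le> opt" "L \<le> s" "s \<le> L + P / \<beta>" "\<beta> > 0" "P \<ge> 0"
  shows "1 - opt / s \<le> P / (L * \<beta> + P)"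
proof -
  have "1 - opt / s \<le> 1 - L / s"
    using assms by (simp add: divide_right_mono)
  also have "\<dots> \<le> 1 - L / (L + P / \<beta>)"
    using assms by (simp add: frac_le)
  also have "\<dots> = P / (L * \<beta> + P)"
  proof -
    have "L * \<beta> + P > 0" using assms by (simp add: add_pos_nonneg)
    then show ?thesis using assms(5) by (simp add: field_simps)
  qed
  finally show ?thesis .
qed

theorem theorem1:
  fixes N :: nat and \<beta> pmin pmax :: real
    and p :: "nat \<Rightarrow> nat \<Rightarrow> real" and r0 :: "nat \<Rightarrow> real"
    and D0 :: "nat \<Rightarrow> nat" and sel :: "nat \<Rightarrow> nat"
  assumes "N \<ge> 2" and "\<beta> > 0"
    and "0 < pmin" and "pmin \<le> pmax"
    and "\<And>n t. n < N \<Longrightarrow> pmin \<le> p n t \<and> p n t \<le> pmax"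
    and "\<And>n. n < N \<Longrightarrow> pmin \<le> r0 n \<and> r0 n \<le> pmax"
    and "selfish N \<beta> D0 r0 p sel"
  shows "\<bar>avg_max_age N D0 sel\<bar> \<noteq> \<infinity> \<and>
         1 - real_of_ereal (opt_avg_max_age N D0) / real_of_ereal (avg_max_age N D0 sel)
           \<le> pmax / ((real N - 1) * \<beta> + pmax)"
proof -
  define L where "L = real N - 1"
  have adm: "admissible N sel" using assms(7) by (simp add: selfish_def)
  have S_ge: "ereal L \<le> avg_max_age N D0 sel"
    using admissible_avg_max_age_ge adm assms(1) by (simp add: L_def)
  have S_le: "avg_max_age N D0 sel \<le> ereal (L + (pmax - pmin) / \<beta>)"
    using selfish_avg_max_age_le assms by (simp add: L_def)
  have opt_le: "opt_avg_max_age N D0 \<le> avg_max_age N D0 sel"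
    unfolding opt_avg_max_age_def using adm by (auto intro: INF_lower)
  have opt_ge: "ereal L \<le> opt_avg_max_age N D0"
    unfolding opt_avg_max_age_def L_def using admissible_avg_max_age_ge assms(1)
    by (auto intro: INF_greatest)
  obtain s opt where s: "avg_max_age N D0 sel = ereal s" and opt: "opt_avg_max_age N D0 = ereal opt"
    using S_ge S_le opt_le opt_ge by (cases "avg_max_age N D0 sel"; cases "opt_avg_max_age N D0") auto
  have "(pmax - pmin) / \<beta> \<le> pmax / \<beta>"
    using assms(2,3) by (simp add: divide_right_mono)
  then have "1 - opt / s \<le> pmax / (L * \<beta> + pmax)"
    using S_ge S_le opt_ge assms(1-4) s opt
    by (intro one_minus_ratio_le[where L = L]) (auto simp: L_def)
  then show ?thesis using s opt by (simp add: L_def)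
qed

end
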